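(* If $\mathcal C=\mathrm{code}(\mathcal H,X)\subseteq 2^{[n]}$ is the code of a stable hyperplane arrangement $(\mathcal H,X)$, then $\Gamma(\mathcal C)=\mathrm{nerve}(\{H_i^+\cap X,\ H_i^-\cap X\}_{i\in[n]})$, where the vertex $i$ corresponds to the set $H_i^+\cap X$ and the vertex $\bar i$ to the set $H_i^-\cap X$.
   Context: An oriented affine hyperplane is $H_i=\{x:w_i\cdot x-h_i=0\}$ with $w_i\neq0$, $H_i^+=\{w_i\cdot x-h_i>0\}$, $H_i^-=\{w_i\cdot x-h_i<0\}$. For $\mathcal H=\{H_1,\dots,H_n\}$ and open convex $X\subseteq\mathbb R^d$, the atom of $\sigma$ is $A_\sigma=\bigl(\bigcap_{i\in\sigma}(H_i^+\cap X)\bigr)\setminus\bigcup_{j\notin\sigma}H_j^+$ ($A_\emptyset=X\setminus\bigcup_iH_i^+$), and $\mathrm{code}(\mathcal H,X)=\{\sigma:A_\sigma\ne\emptyset\}$. $(\mathcal H,X)$ is stable if $X$ is open convex and whenever $X\cap\bigcap_{i\in\sigma}H_i\ne\emptyset$, $\dim\bigcap_{i\in\sigma}H_i=d-|\sigma|$. The polar complex $\Gamma(\mathcal C)$ is the simplicial complex on $[n]\sqcup\{\bar1,\dots,\bar n\}$ consisting of all subsets of the sets $\Sigma(\sigma)=\sigma\sqcup\{\bar i:i\in[n]\setminus\sigma\}$, $\sigma\in\mathcal C$. The nerve of a family of sets $\{V_v\}_{v\in V}$ is $\{S\subseteq V:\bigcap_{v\in S}V_v\neq\emptyset\}$. *)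

theory Defs
  imports "HOL-Analysis.Analysis"
begin

definition hyp :: "(nat \<Rightarrow> 'a::euclidean_space) \<Rightarrow> (nat \<Rightarrow> real) \<Rightarrow> nat \<Rightarrow> 'a set" where
  "hyp w h i = {x. w i \<bullet> x - h i = 0}"

definition hplus :: "(nat \<Rightarrow> 'a::euclidean_space) \<Rightarrow> (nat \<Rightarrow> real) \<Rightarrow> nat \<Rightarrow> 'a set" where
  "hplus w h i = {x. w i \<bullet> x - h i > 0}"

definition hminus :: "(nat \<Rightarrow> 'a::euclidean_space) \<Rightarrow> (nat \<Rightarrow> real) \<Rightarrow> nat \<Rightarrow> 'a set" where
  "hminus w h i = {x. w i \<bullet> x - h i < 0}"

text \<open>Atom of sigma (the X-intersection also covers the case sigma = empty).\<close>
definition atom :: "nat \<Rightarrow> (nat \<Rightarrow> 'a::euclidean_space) \<Rightarrow> (nat \<Rightarrow> real) \<Rightarrow> 'a set \<Rightarrow> nat set \<Rightarrow> 'a set" where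
  "atom n w h X \<sigma> = (X \<inter> (\<Inter>i\<in>\<sigma>. hplus w h i \<inter> X)) - (\<Union>j\<in>{1..n} - \<sigma>. hplus w h j)"

definition code :: "nat \<Rightarrow> (nat \<Rightarrow> 'a::euclidean_space) \<Rightarrow> (nat \<Rightarrow> real) \<Rightarrow> 'a set \<Rightarrow> nat set set" where
  "code n w h X = {\<sigma>. \<sigma> \<subseteq> {1..n} \<and> atom n w h X \<sigma> \<noteq> {}}"

definition stable :: "nat \<Rightarrow> (nat \<Rightarrow> 'a::euclidean_space) \<Rightarrow> (nat \<Rightarrow> real) \<Rightarrow> 'a set \<Rightarrow> bool" where
  "stable n w h X \<longleftrightarrow> open X \<and> convex X \<and>
     (\<forall>\<sigma>. \<sigma> \<subseteq> {1..n} \<longrightarrow> X \<inter> (\<Inter>i\<in>\<sigma>. hyp w h i) \<noteq> {} \<longrightarrow>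
        aff_dim (\<Inter>i\<in>\<sigma>. hyp w h i) = int DIM('a) - int (card \<sigma>))"

text \<open>Vertex Inl i stands for i, vertex Inr i stands for bar i.\<close>
definition polar_face :: "nat \<Rightarrow> nat set \<Rightarrow> (nat + nat) set" where
  "polar_face n \<sigma> = Inl ` \<sigma> \<union> Inr ` ({1..n} - \<sigma>)"

definition polar_complex :: "nat \<Rightarrow> nat set set \<Rightarrow> (nat + nat) set set" where
  "polar_complex n C = {S. \<exists>\<sigma>\<in>C. S \<subseteq> polar_face n \<sigma>}"

text \<open>Nerve of a family F indexed by V, with intersections taken inside the ambient set U
  (so the empty face is present iff U is nonempty).\<close>
definition nerve :: "'b set \<Rightarrow> 'v set \<Rightarrow> ('v \<Rightarrow> 'b set) \<Rightarrow> 'v set set" where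
  "nerve U V F = {S. S \<subseteq> V \<and> U \<inter> (\<Inter>v\<in>S. F v) \<noteq> {}}"

end

theory Submission
  imports Defs
begin

text \<open>A face of \<open>\<Gamma>(\<C>)\<close> lies in some \<open>\<Sigma>(\<sigma>)\<close> with a point \<open>x\<close> of the atom \<open>A\<^sub>\<sigma>\<close>, which satisfies
  \<open>w\<^sub>j \<bullet> x \<le> h\<^sub>j\<close> for \<open>j \<notin> \<sigma>\<close>, possibly with equality. Stability makes the normals of the
  hyperplanes through \<open>x\<close> linearly independent, so some direction \<open>v\<close> has \<open>w\<^sub>j \<bullet> v = -1\<close> for
  all of them; moving from \<open>x\<close> a little along \<open>v\<close> stays in the open set \<open>X\<close>, keeps all strict
  inequalities and makes the remaining ones strict. Conversely, a point in the intersection of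
  a nerve face lies in the atom of its own sign pattern.\<close>

lemma exists_inner_eq_on_independent:
  fixes W :: "'a::euclidean_space set"
  assumes "independent W"
  shows "\<exists>v. \<forall>u\<in>W. u \<bullet> v = f u"
proof -
  obtain g :: "'a \<Rightarrow> real" where g: "linear g" "\<forall>u\<in>W. g u = f u"
    using linear_independent_extend[OF assms] by blast
  define v where "v = (\<Sum>b\<in>Basis. g b *\<^sub>R b)"
  have "u \<bullet> v = g u" for u
  proof -
    have "g u = g (\<Sum>b\<in>Basis. (u \<bullet> b) *\<^sub>R b)" by (simp add: euclidean_representation)
    also have "\<dots> = (\<Sum>b\<in>Basis. (u \<bullet> b) * g b)"
      using g(1) by (simp add: linear_sum linear_scale)
    also have "\<dots> = u \<bullet> v" unfolding v_def by (simp add: inner_sum_right mult.commute)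
    finally show ?thesis by simp
  qed
  with g(2) show ?thesis by (intro exI[of _ v]) simp
qed

lemma aff_dim_Inter_hyp:
  fixes w :: "nat \<Rightarrow> 'a::euclidean_space"
  assumes x0: "\<forall>j\<in>T. x0 \<in> hyp w h j"
  shows "aff_dim (\<Inter>j\<in>T. hyp w h j) = int DIM('a) - int (dim (w ` T))"
proof -
  define L where "L = {y. \<forall>u \<in> span (w ` T). orthogonal u y}"
  have "(\<Inter>j\<in>T. hyp w h j) = (+) x0 ` L"
  proof (intro equalityI subsetI)
    fix x assume "x \<in> (\<Inter>j\<in>T. hyp w h j)"
    then have "\<forall>j\<in>T. orthogonal (w j) (x - x0)"
      using x0 by (auto simp: hyp_def orthogonal_def inner_diff_right)
    then have "orthogonal u (x - x0)" if "u \<in> span (w ` T)" for u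
      using orthogonal_to_span[OF that, of "x - x0"] by (auto simp: orthogonal_commute)
    then have "x - x0 \<in> L" unfolding L_def by blast
    then show "x \<in> (+) x0 ` L" by (metis add.commute diff_add_cancel image_eqI)
  next
    fix x assume "x \<in> (+) x0 ` L"
    then show "x \<in> (\<Inter>j\<in>T. hyp w h j)"
      using x0 by (auto simp: L_def hyp_def orthogonal_def inner_add_right span_base)
  qed
  moreover have "subspace L"
    unfolding L_def subspace_def orthogonal_def by (auto simp: inner_add_right)
  moreover have "dim L + dim (w ` T) = DIM('a)"
    using dim_subspace_orthogonal_to_vectors[of "span (w ` T)" UNIV] by (simp add: L_def)
  ultimately show ?thesis by (simp add: aff_dim_translation_eq aff_dim_subspace)
qed

lemma independent_image_if_dim_eq_card:
  fixes w :: "'b \<Rightarrow> 'a::euclidean_space"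
  assumes "finite T" "dim (w ` T) = card T"
  shows "independent (w ` T)"
proof -
  have "dim (w ` T) \<le> card (w ` T)"
    using assms(1) by (intro dim_le_card) (auto simp: span_superset)
  with assms card_image_le[of T w] have "card (w ` T) = dim (w ` T)" by simp
  with assms(1) show ?thesis using card_eq_dim[of "w ` T" "w ` T"] by (simp add: span_superset)
qed

lemma stable_normals_independent:
  assumes "stable n w h X" "T \<subseteq> {1..n}" "x \<in> X" "\<forall>j\<in>T. x \<in> hyp w h j"
  shows "independent (w ` T)"
proof -
  have "aff_dim (\<Inter>j\<in>T. hyp w h j) = int DIM('a) - int (card T)"
    using assms unfolding stable_def by blast
  then have "dim (w ` T) = card T"
    using aff_dim_Inter_hyp[OF assms(4)] by simp
  moreover have "finite T" using assms(2) finite_subset by blast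
  ultimately show ?thesis by (rule independent_image_if_dim_eq_card[rotated])
qed

lemma code_contains_point_off_hyperplanes:
  assumes "stable n w h X" "\<sigma> \<in> code n w h X"
  shows "\<exists>y\<in>X. \<forall>i\<in>{1..n}. (i \<in> \<sigma> \<longrightarrow> y \<in> hplus w h i) \<and> (i \<notin> \<sigma> \<longrightarrow> y \<in> hminus w h i)"
proof -
  obtain x where x: "x \<in> atom n w h X \<sigma>" and \<sigma>: "\<sigma> \<subseteq> {1..n}"
    using assms(2) unfolding code_def by blast
  have xX: "x \<in> X" and x_pos: "\<forall>i\<in>\<sigma>. x \<in> hplus w h i"
    and x_nonpos: "\<forall>j\<in>{1..n} - \<sigma>. x \<notin> hplus w h j"
    using x unfolding atom_def by blast+
  define \<tau> where "\<tau> = {j\<in>{1..n}. x \<in> hyp w h j}"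
  have "independent (w ` \<tau>)"
    by (rule stable_normals_independent[OF assms(1) _ xX]) (auto simp: \<tau>_def)
  then obtain v where v: "\<forall>u\<in>w ` \<tau>. u \<bullet> v = -1"
    using exists_inner_eq_on_independent[of _ "\<lambda>_. -1"] by blast
  define p where "p t = x + t *\<^sub>R v" for t :: real
  have p_tendsto: "(p \<longlongrightarrow> x) (at_right 0)"
    unfolding p_def by (auto intro!: tendsto_eq_intros)
  have "eventually (\<lambda>t. (i \<in> \<sigma> \<longrightarrow> p t \<in> hplus w h i) \<and> (i \<notin> \<sigma> \<longrightarrow> p t \<in> hminus w h i))
      (at_right 0)" if i: "i \<in> {1..n}" for i
  proof (cases "i \<in> \<tau>")
    case True
    then have "i \<notin> \<sigma>" using x_pos by (auto simp: \<tau>_def hyp_def hplus_def)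
    moreover have "p t \<in> hminus w h i" if "t > 0" for t
      using True v that by (simp add: \<tau>_def hyp_def hminus_def p_def inner_add_right)
    ultimately show ?thesis
      by (intro eventually_mono[OF eventually_at_right_less[of 0]]) simp
  next
    case False
    let ?half = "if i \<in> \<sigma> then hplus w h i else hminus w h i"
    have "x \<in> ?half"
    proof (cases "i \<in> \<sigma>")
      case False
      then have "x \<notin> hplus w h i" using x_nonpos i by blast
      with False \<open>i \<notin> \<tau>\<close> i show ?thesis by (auto simp: \<tau>_def hyp_def hplus_def hminus_def)
    qed (use x_pos in simp)
    moreover have "open ?half"
      by (simp add: hplus_def hminus_def open_halfspace_gt open_halfspace_lt)
    ultimately have "eventually (\<lambda>t. p t \<in> ?half) (at_right 0)"
      by (rule topological_tendstoD[OF p_tendsto, rotated])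
    then show ?thesis by (rule eventually_mono) (simp split: if_splits)
  qed
  then have "eventually (\<lambda>t. \<forall>i\<in>{1..n}. (i \<in> \<sigma> \<longrightarrow> p t \<in> hplus w h i) \<and>
      (i \<notin> \<sigma> \<longrightarrow> p t \<in> hminus w h i)) (at_right 0)"
    by (simp add: eventually_ball_finite_distrib)
  moreover have "eventually (\<lambda>t. p t \<in> X) (at_right 0)"
    using topological_tendstoD[OF p_tendsto _ xX] assms(1) by (simp add: stable_def)
  ultimately show ?thesis
    using eventually_happens'[OF trivial_limit_at_right_real eventually_conj] by blast
qed

lemma sign_pattern_in_code:
  assumes "x \<in> X"
  shows "{i\<in>{1..n}. x \<in> hplus w h i} \<in> code n w h X"
  using assms unfolding code_def atom_def by auto

theorem lemma2p9:
  fixes n :: nat and w :: "nat \<Rightarrow> 'a::euclidean_space" and h :: "nat \<Rightarrow> real" and X :: "'a set"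
  assumes "\<forall>i\<in>{1..n}. w i \<noteq> 0"
    and "stable n w h X"
  shows "polar_complex n (code n w h X) =
         nerve X (Inl ` {1..n} \<union> Inr ` {1..n})
           (\<lambda>v. case v of Inl i \<Rightarrow> hplus w h i \<inter> X | Inr i \<Rightarrow> hminus w h i \<inter> X)"
proof (intro equalityI subsetI)
  fix S assume "S \<in> polar_complex n (code n w h X)"
  then obtain \<sigma> where \<sigma>: "\<sigma> \<in> code n w h X" "S \<subseteq> polar_face n \<sigma>"
    unfolding polar_complex_def by blast
  then obtain y where "y \<in> X" and
    "\<forall>i\<in>{1..n}. (i \<in> \<sigma> \<longrightarrow> y \<in> hplus w h i) \<and> (i \<notin> \<sigma> \<longrightarrow> y \<in> hminus w h i)"
    using code_contains_point_off_hyperplanes[OF assms(2)] by blast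
  with \<sigma> show "S \<in> nerve X (Inl ` {1..n} \<union> Inr ` {1..n})
           (\<lambda>v. case v of Inl i \<Rightarrow> hplus w h i \<inter> X | Inr i \<Rightarrow> hminus w h i \<inter> X)"
    unfolding nerve_def polar_face_def code_def by (auto 4 4 split: sum.split)
next
  fix S assume "S \<in> nerve X (Inl ` {1..n} \<union> Inr ` {1..n})
           (\<lambda>v. case v of Inl i \<Rightarrow> hplus w h i \<inter> X | Inr i \<Rightarrow> hminus w h i \<inter> X)"
  then obtain x where "x \<in> X" and S: "S \<subseteq> Inl ` {1..n} \<union> Inr ` {1..n}"
    and x: "\<forall>s\<in>S. x \<in> (case s of Inl i \<Rightarrow> hplus w h i \<inter> X | Inr i \<Rightarrow> hminus w h i \<inter> X)"
    unfolding nerve_def by blast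
  have "S \<subseteq> polar_face n {i\<in>{1..n}. x \<in> hplus w h i}"
    using S x unfolding polar_face_def hplus_def hminus_def by force
  with sign_pattern_in_code[OF \<open>x \<in> X\<close>] show "S \<in> polar_complex n (code n w h X)"
    unfolding polar_complex_def by blast
qed

end
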